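(* Let $K$ be a compact Hausdorff space having the extension property and let $I$ be any set. Then every isometric copy of $c_0(I)$ in $C(K)$ is complemented; i.e., for every linear isometric embedding $S:c_0(I)\to C(K)$, the image of $S$ is complemented in $C(K)$.
   Context: $C(K)$ denotes the Banach space of real-valued continuous functions on $K$ with the supremum norm. For a closed set $F\subseteq K$, an extension operator for $F$ in $K$ is a bounded linear map $E:C(F)\to C(K)$ such that $E(f)|_F=f$ for all $f\in C(F)$. $K$ has the extension property if every nonempty closed subset of $K$ admits an extension operator in $K$. *)

theory Defs
  imports "HOL-Analysis.Analysis"
begin

text \<open>C(F) for a subset F of the space X: real-valued continuous functions on F
  (with the subspace topology), normalised to be 0 outside F.\<close>
definition cfun :: "'a topology \<Rightarrow> 'a set \<Rightarrow> ('a \<Rightarrow> real) set" where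
  "cfun X F = {f. continuous_map (subtopology X F) euclideanreal f \<and> (\<forall>x. x \<notin> F \<longrightarrow> f x = 0)}"

definition supn :: "'a set \<Rightarrow> ('a \<Rightarrow> real) \<Rightarrow> real" where
  "supn S f = Sup (insert 0 ((\<lambda>x. \<bar>f x\<bar>) ` S))"

definition linear_on :: "('a \<Rightarrow> real) set \<Rightarrow> (('a \<Rightarrow> real) \<Rightarrow> ('b \<Rightarrow> real)) \<Rightarrow> bool" where
  "linear_on V T \<longleftrightarrow>
     (\<forall>f\<in>V. \<forall>g\<in>V. T (\<lambda>x. f x + g x) = (\<lambda>y. T f y + T g y)) \<and>
     (\<forall>c. \<forall>f\<in>V. T (\<lambda>x. c * f x) = (\<lambda>y. c * T f y))"

definition extension_operator :: "'a topology \<Rightarrow> 'a set \<Rightarrow> (('a \<Rightarrow> real) \<Rightarrow> ('a \<Rightarrow> real)) \<Rightarrow> bool" where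
  "extension_operator X F E \<longleftrightarrow>
     (\<forall>f\<in>cfun X F. E f \<in> cfun X (topspace X)) \<and>
     linear_on (cfun X F) E \<and>
     (\<exists>B. \<forall>f\<in>cfun X F. supn (topspace X) (E f) \<le> B * supn F f) \<and>
     (\<forall>f\<in>cfun X F. \<forall>x\<in>F. E f x = f x)"

definition extension_property :: "'a topology \<Rightarrow> bool" where
  "extension_property X \<longleftrightarrow>
     (\<forall>F. closedin X F \<and> F \<noteq> {} \<longrightarrow> (\<exists>E. extension_operator X F E))"

definition c0 :: "'i set \<Rightarrow> ('i \<Rightarrow> real) set" where
  "c0 I = {u. (\<forall>i. i \<notin> I \<longrightarrow> u i = 0) \<and> (\<forall>e>0. finite {i\<in>I. e \<le> \<bar>u i\<bar>})}"

definition lin_isometric_embedding ::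
  "'i set \<Rightarrow> 'a topology \<Rightarrow> (('i \<Rightarrow> real) \<Rightarrow> ('a \<Rightarrow> real)) \<Rightarrow> bool" where
  "lin_isometric_embedding I X S \<longleftrightarrow>
     (\<forall>u\<in>c0 I. S u \<in> cfun X (topspace X)) \<and>
     linear_on (c0 I) S \<and>
     (\<forall>u\<in>c0 I. supn (topspace X) (S u) = supn I u)"

definition complemented_in :: "'a topology \<Rightarrow> ('a \<Rightarrow> real) set \<Rightarrow> bool" where
  "complemented_in X V \<longleftrightarrow>
     (\<exists>P. (\<forall>f\<in>cfun X (topspace X). P f \<in> cfun X (topspace X)) \<and>
          linear_on (cfun X (topspace X)) P \<and>
          (\<exists>B. \<forall>f\<in>cfun X (topspace X). supn (topspace X) (P f) \<le> B * supn (topspace X) f) \<and>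
          P ` cfun X (topspace X) = V \<and>
          (\<forall>f\<in>V. P f = f))"

end

theory Submission
  imports Defs
begin

text \<open>For each i pick a point \<open>x\<^sub>i\<close> where \<open>\<bar>S e\<^sub>i\<bar>\<close> attains its norm 1; isometry forces
  \<open>S u (x\<^sub>i) = \<plusminus>u\<^sub>i\<close>, so the coordinates of S u can be read off at the points \<open>x\<^sub>i\<close>. A function h
  in C(K) is first corrected by an extension operator so that it vanishes on the common zero set L
  of the image; the corrected function, evaluated along \<open>x\<^sub>i\<close>, lies in \<open>c\<^sub>0(I)\<close> by a compactness
  argument, and applying S to it gives a bounded projection onto the image, which is the
  identity there because the correction is zero on functions vanishing on L.\<close>

lemma abs_le_supn:
  assumes "bdd_above ((\<lambda>x. \<bar>f x\<bar>) ` S)" "x \<in> S"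
  shows "\<bar>f x\<bar> \<le> supn S f"
  unfolding supn_def using assms by (intro cSup_upper) auto

lemma supn_nonneg:
  assumes "bdd_above ((\<lambda>x. \<bar>f x\<bar>) ` S)"
  shows "0 \<le> supn S f"
  unfolding supn_def using assms by (intro cSup_upper) auto

lemma supn_le:
  assumes "0 \<le> B" "\<And>x. x \<in> S \<Longrightarrow> \<bar>f x\<bar> \<le> B"
  shows "supn S f \<le> B"
  unfolding supn_def using assms by (intro cSup_least) auto

lemma linear_on_add:
  "linear_on V T \<Longrightarrow> f \<in> V \<Longrightarrow> g \<in> V \<Longrightarrow> T (\<lambda>x. f x + g x) = (\<lambda>y. T f y + T g y)"
  by (simp add: linear_on_def)

lemma linear_on_scale:
  "linear_on V T \<Longrightarrow> f \<in> V \<Longrightarrow> T (\<lambda>x. c * f x) = (\<lambda>y. c * T f y)"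
  by (simp add: linear_on_def)

lemma cfun_topspace:
  "cfun X (topspace X) = {f. continuous_map X euclideanreal f \<and> (\<forall>x. x \<notin> topspace X \<longrightarrow> f x = 0)}"
  by (simp add: cfun_def)

lemma compact_space_bdd_above_abs:
  assumes "compact_space X" "continuous_map X euclideanreal f"
  shows "bdd_above ((\<lambda>x. \<bar>f x\<bar>) ` topspace X)"
proof -
  have "compactin euclideanreal ((\<lambda>x. \<bar>f x\<bar>) ` topspace X)"
    using assms image_compactin compact_space_def continuous_map_real_abs by blast
  then show ?thesis by (simp add: compact_imp_bounded bounded_imp_bdd_above)
qed

lemma abs_le_supn_cfun:
  assumes "compact_space X" "f \<in> cfun X (topspace X)" "x \<in> topspace X"
  shows "\<bar>f x\<bar> \<le> supn (topspace X) f"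
  using assms by (intro abs_le_supn compact_space_bdd_above_abs) (auto simp: cfun_topspace)

lemma supn_cfun_nonneg:
  assumes "compact_space X" "f \<in> cfun X (topspace X)"
  shows "0 \<le> supn (topspace X) f"
  using assms by (intro supn_nonneg compact_space_bdd_above_abs) (auto simp: cfun_topspace)

lemma compact_space_supn_attained:
  assumes "compact_space X" "continuous_map X euclideanreal f" "topspace X \<noteq> {}"
  shows "\<exists>x\<in>topspace X. \<bar>f x\<bar> = supn (topspace X) f"
proof -
  have "compact ((\<lambda>x. \<bar>f x\<bar>) ` topspace X)"
    using assms image_compactin compact_space_def compactin_euclidean_iff
      continuous_map_real_abs by blast
  then obtain x where x: "x \<in> topspace X" "\<forall>y\<in>topspace X. \<bar>f y\<bar> \<le> \<bar>f x\<bar>"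
    using compact_attains_sup[of "(\<lambda>x. \<bar>f x\<bar>) ` topspace X"] assms(3) by auto
  then have "supn (topspace X) f = \<bar>f x\<bar>"
    unfolding supn_def by (intro cSup_eq_maximum) auto
  with x show ?thesis by auto
qed

lemma c0_add:
  assumes "u \<in> c0 I" "v \<in> c0 I" shows "(\<lambda>j. u j + v j) \<in> c0 I"
proof -
  have "finite {i\<in>I. e \<le> \<bar>u i + v i\<bar>}" if "e > 0" for e
  proof (rule finite_subset)
    show "{i\<in>I. e \<le> \<bar>u i + v i\<bar>} \<subseteq> {i\<in>I. e/2 \<le> \<bar>u i\<bar>} \<union> {i\<in>I. e/2 \<le> \<bar>v i\<bar>}"
      by auto
    have "finite {i\<in>I. e/2 \<le> \<bar>u i\<bar>}" "finite {i\<in>I. e/2 \<le> \<bar>v i\<bar>}"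
      using assms \<open>e > 0\<close> half_gt_zero[of e] unfolding c0_def by blast+
    then show "finite ({i\<in>I. e/2 \<le> \<bar>u i\<bar>} \<union> {i\<in>I. e/2 \<le> \<bar>v i\<bar>})"
      by simp
  qed
  then show ?thesis using assms unfolding c0_def by auto
qed

lemma c0_scale:
  assumes "u \<in> c0 I" shows "(\<lambda>j. c * u j) \<in> c0 I"
proof (cases "c = 0")
  case True then show ?thesis by (simp add: c0_def)
next
  case False
  have "{i\<in>I. e \<le> \<bar>c * u i\<bar>} = {i\<in>I. e / \<bar>c\<bar> \<le> \<bar>u i\<bar>}" for e
    using False by (auto simp: abs_mult field_simps mult.commute)
  then show ?thesis using assms False unfolding c0_def by auto
qed

lemma c0_fun_upd_zero:
  assumes "u \<in> c0 I" shows "u(i := 0) \<in> c0 I"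
proof -
  have "finite {j\<in>I. e \<le> \<bar>(u(i := 0)) j\<bar>}" if "e > 0" for e
    by (rule finite_subset[of _ "{j\<in>I. e \<le> \<bar>u j\<bar>}"]) (use assms that in \<open>auto simp: c0_def\<close>)
  then show ?thesis using assms unfolding c0_def by auto
qed

lemma indicator_in_c0:
  assumes "i \<in> I" shows "(indicator {i} :: 'i \<Rightarrow> real) \<in> c0 I"
proof -
  have "finite {j\<in>I. e \<le> \<bar>indicator {i} j :: real\<bar>}" if "e > 0" for e
    by (rule finite_subset[of _ "{i}"]) (use that in \<open>auto simp: indicator_def\<close>)
  then show ?thesis using assms unfolding c0_def by (auto simp: indicator_def)
qed

lemma supn_indicator:
  assumes "i \<in> I" shows "supn I (indicator {i} :: 'i \<Rightarrow> real) = 1"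
  unfolding supn_def using assms by (intro cSup_eq_maximum) (auto simp: indicator_def)

lemma c0_bdd_above:
  assumes "u \<in> c0 I"
  shows "bdd_above ((\<lambda>x. \<bar>u x\<bar>) ` I)"
proof -
  define A where "A = {i\<in>I. 1 \<le> \<bar>u i\<bar>}"
  have "finite A" using assms unfolding c0_def A_def by auto
  have "\<bar>u i\<bar> \<le> max 1 (Max (insert 0 ((\<lambda>i. \<bar>u i\<bar>) ` A)))" if "i \<in> I" for i
  proof (cases "i \<in> A")
    case True
    then have "\<bar>u i\<bar> \<le> Max (insert 0 ((\<lambda>i. \<bar>u i\<bar>) ` A))"
      using \<open>finite A\<close> by (intro Max_ge) auto
    then show ?thesis by linarith
  next
    case False
    then show ?thesis using that A_def by auto
  qed
  then show ?thesis by (auto simp: bdd_above_def)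
qed

definition zero_extension :: "'a set \<Rightarrow> ('a \<Rightarrow> real) \<Rightarrow> 'a \<Rightarrow> real" where
  "zero_extension L h x = (if x \<in> L then h x else 0)"

lemma zero_extension_in_cfun:
  assumes "h \<in> cfun X (topspace X)"
  shows "zero_extension L h \<in> cfun X L"
proof -
  have "continuous_map (subtopology X L) euclideanreal h"
    using assms continuous_map_from_subtopology by (auto simp: cfun_topspace)
  then have "continuous_map (subtopology X L) euclideanreal (zero_extension L h)"
    by (rule continuous_map_eq) (auto simp: zero_extension_def)
  then show ?thesis by (auto simp: cfun_def zero_extension_def)
qed

lemma supn_zero_extension_nonneg:
  assumes "compact_space X" "h \<in> cfun X (topspace X)" "L \<subseteq> topspace X"
  shows "0 \<le> supn L (zero_extension L h)"
proof (rule supn_nonneg)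
  have "\<bar>zero_extension L h x\<bar> \<le> supn (topspace X) h" if "x \<in> L" for x
    using that assms abs_le_supn_cfun[OF assms(1,2)] by (auto simp: zero_extension_def)
  then show "bdd_above ((\<lambda>x. \<bar>zero_extension L h x\<bar>) ` L)"
    by (auto simp: bdd_above_def)
qed

lemma supn_zero_extension_le:
  assumes "compact_space X" "h \<in> cfun X (topspace X)" "L \<subseteq> topspace X"
  shows "supn L (zero_extension L h) \<le> supn (topspace X) h"
  using assms abs_le_supn_cfun[OF assms(1,2)] supn_cfun_nonneg[OF assms(1,2)]
  by (intro supn_le) (auto simp: zero_extension_def)

lemma extension_property_imp_extension_operator:
  assumes "extension_property X" "closedin X L"
  shows "\<exists>E. extension_operator X L E"
proof (cases "L = {}")
  case False
  then show ?thesis using assms unfolding extension_property_def by blast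
next
  case True
  have "supn (topspace X) (\<lambda>x. 0) \<le> 0 * supn L h" for h
    using supn_le[of 0 "topspace X" "\<lambda>x. 0"] by simp
  then have "extension_operator X L (\<lambda>h x. 0)"
    unfolding extension_operator_def linear_on_def using True
    by (auto simp: cfun_def intro!: exI[of _ 0])
  then show ?thesis by blast
qed

text \<open>By compactness, the set where \<open>\<bar>g\<bar> \<ge> \<epsilon>\<close> is covered by finitely many sets
  \<open>\<bar>f\<bar> > \<bar>f z\<bar>/2\<close>, each containing only finitely many of the points xs i.\<close>

lemma finite_large_values_at_points:
  assumes "compact_space X" "continuous_map X euclideanreal g"
    and F_cont: "\<And>f. f \<in> F \<Longrightarrow> continuous_map X euclideanreal f"
    and F_small: "\<And>f \<epsilon>. f \<in> F \<Longrightarrow> \<epsilon> > 0 \<Longrightarrow> finite {i\<in>I. \<epsilon> \<le> \<bar>f (xs i)\<bar>}"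
    and support: "\<And>z. z \<in> topspace X \<Longrightarrow> g z \<noteq> 0 \<Longrightarrow> \<exists>f\<in>F. f z \<noteq> 0"
    and "\<And>i. i \<in> I \<Longrightarrow> xs i \<in> topspace X" and "\<epsilon> > 0"
  shows "finite {i\<in>I. \<epsilon> \<le> \<bar>g (xs i)\<bar>}"
proof -
  define C where "C = {x \<in> topspace X. g x \<in> {t. \<epsilon> \<le> \<bar>t\<bar>}}"
  have "closed {t::real. \<epsilon> \<le> \<bar>t\<bar>}"
    by (intro closed_Collect_le continuous_intros)
  then have "closedin X C"
    unfolding C_def using assms(2) by (intro closedin_continuous_map_preimage) auto
  then have "compactin X C" using closedin_compact_space[OF assms(1)] by blast
  define \<U> where "\<U> = {V. openin X V \<and> finite {i\<in>I. xs i \<in> V}}"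
  have "C \<subseteq> \<Union>\<U>"
  proof
    fix z assume "z \<in> C"
    with \<open>\<epsilon> > 0\<close> obtain f where f: "f \<in> F" "f z \<noteq> 0"
      using support by (fastforce simp: C_def)
    define V where "V = {x \<in> topspace X. f x \<in> {t. \<bar>f z\<bar>/2 < \<bar>t\<bar>}}"
    have "open {t::real. \<bar>f z\<bar>/2 < \<bar>t\<bar>}"
      by (intro open_Collect_less continuous_intros)
    then have "openin X V"
      unfolding V_def using F_cont[OF f(1)] by (intro openin_continuous_map_preimage) auto
    moreover have "finite {i\<in>I. xs i \<in> V}"
    proof (rule finite_subset)
      show "{i\<in>I. xs i \<in> V} \<subseteq> {i\<in>I. \<bar>f z\<bar>/2 \<le> \<bar>f (xs i)\<bar>}"
        by (auto simp: V_def)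
      show "finite {i\<in>I. \<bar>f z\<bar>/2 \<le> \<bar>f (xs i)\<bar>}"
        using f by (intro F_small) auto
    qed
    moreover have "z \<in> V" using \<open>z \<in> C\<close> f by (auto simp: V_def C_def)
    ultimately show "z \<in> \<Union>\<U>" by (auto simp: \<U>_def)
  qed
  then obtain \<F> where \<F>: "finite \<F>" "\<F> \<subseteq> \<U>" "C \<subseteq> \<Union>\<F>"
    using compactinD[OF \<open>compactin X C\<close>, of \<U>] by (auto simp: \<U>_def)
  show ?thesis
  proof (rule finite_subset)
    show "{i\<in>I. \<epsilon> \<le> \<bar>g (xs i)\<bar>} \<subseteq> (\<Union>V\<in>\<F>. {i\<in>I. xs i \<in> V})"
    proof clarify
      fix i assume "i \<in> I" "\<epsilon> \<le> \<bar>g (xs i)\<bar>"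
      then have "xs i \<in> C" using assms(6) by (simp add: C_def)
      then show "i \<in> (\<Union>V\<in>\<F>. {i\<in>I. xs i \<in> V})" using \<F>(3) \<open>i \<in> I\<close> by blast
    qed
    show "finite (\<Union>V\<in>\<F>. {i\<in>I. xs i \<in> V})"
      using \<F>(1,2) by (auto simp: \<U>_def)
  qed
qed

locale c0_isometry =
  fixes X :: "'a topology" and I :: "'i set" and S :: "('i \<Rightarrow> real) \<Rightarrow> 'a \<Rightarrow> real"
  assumes compact: "compact_space X" and embedding: "lin_isometric_embedding I X S"
begin

lemma S_cfun: "u \<in> c0 I \<Longrightarrow> S u \<in> cfun X (topspace X)"
  and S_linear: "linear_on (c0 I) S"
  and supn_S: "u \<in> c0 I \<Longrightarrow> supn (topspace X) (S u) = supn I u"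
  using embedding unfolding lin_isometric_embedding_def by auto

lemma S_continuous: "u \<in> c0 I \<Longrightarrow> continuous_map X euclideanreal (S u)"
  using S_cfun by (simp add: cfun_topspace)

lemma peak_point_exists:
  assumes "i \<in> I" shows "\<exists>x\<in>topspace X. \<bar>S (indicator {i}) x\<bar> = 1"
proof -
  have norm1: "supn (topspace X) (S (indicator {i})) = 1"
    using supn_S[OF indicator_in_c0] supn_indicator assms by simp
  then have "topspace X \<noteq> {}" by (auto simp: supn_def)
  then show ?thesis
    using compact_space_supn_attained[OF compact S_continuous[OF indicator_in_c0[OF assms]]] norm1
    by simp
qed

text \<open>Here \<open>e\<^sub>i = indicator {i}\<close>. At a point where \<open>\<bar>S e\<^sub>i\<bar>\<close> attains its norm 1, \<open>S w\<close> vanishes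
  for every w supported off i: otherwise adding a suitable multiple \<open>t e\<^sub>i\<close> with \<open>\<bar>t\<bar> > \<parallel>w\<parallel>\<close> would give \<open>\<bar>S(w + t e\<^sub>i) x\<bar> > \<bar>t\<bar> = \<parallel>w + t e\<^sub>i\<parallel>\<close>.\<close>

lemma vanishes_at_peak_point:
  assumes i: "i \<in> I" and x: "x \<in> topspace X" and peak: "\<bar>S (indicator {i}) x\<bar> = 1"
    and w: "w \<in> c0 I" "w i = 0"
  shows "S w x = 0"
proof (rule ccontr)
  assume "S w x \<noteq> 0"
  define s where "s = S (indicator {i}) x"
  define T where "T = supn I w + 1"
  define t where "t = sgn (S w x) * s * T"
  define v where "v = (\<lambda>j. w j + t * indicator {i} j)"
  have e: "indicator {i} \<in> c0 I" using indicator_in_c0[OF i] .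
  have v: "v \<in> c0 I" unfolding v_def using w e by (intro c0_add c0_scale)
  have T: "T > 0" using supn_nonneg[OF c0_bdd_above[OF w(1)]] by (simp add: T_def)
  have abs_s: "\<bar>s\<bar> = 1" using peak by (simp add: s_def)
  then have "s * s = 1" by (metis abs_mult_self_eq mult_1)
  then have ts: "t * s = sgn (S w x) * T" by (simp add: t_def algebra_simps)
  have abs_t: "\<bar>t\<bar> = T"
    using T abs_s \<open>S w x \<noteq> 0\<close> by (simp add: t_def abs_mult)
  have "supn I v \<le> T"
  proof (rule supn_le)
    fix j assume "j \<in> I"
    show "\<bar>v j\<bar> \<le> T"
    proof (cases "j = i")
      case False
      then show ?thesis using abs_le_supn[OF c0_bdd_above[OF w(1)] \<open>j \<in> I\<close>]
        by (simp add: v_def T_def)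
    qed (use w(2) abs_t in \<open>simp add: v_def\<close>)
  qed (use T in simp)
  moreover have "\<bar>S v x\<bar> \<le> supn I v"
    using abs_le_supn_cfun[OF compact S_cfun[OF v] x] supn_S[OF v] by simp
  moreover have "S v x = S w x + t * s"
    using linear_on_add[OF S_linear w(1) c0_scale[OF e]] linear_on_scale[OF S_linear e]
    by (simp add: v_def s_def)
  ultimately show False
    using ts T \<open>S w x \<noteq> 0\<close> by (auto simp: sgn_if split: if_splits)
qed

lemma eval_at_peak_point:
  assumes "i \<in> I" "x \<in> topspace X" "\<bar>S (indicator {i}) x\<bar> = 1" "u \<in> c0 I"
  shows "S u x = S (indicator {i}) x * u i"
proof -
  have e: "indicator {i} \<in> c0 I" using indicator_in_c0[OF assms(1)] .
  have "u = (\<lambda>j. (u(i := 0)) j + u i * indicator {i} j)"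
    by (auto simp: indicator_def)
  then have "S u x = S (u(i := 0)) x + u i * S (indicator {i}) x"
    using linear_on_add[OF S_linear c0_fun_upd_zero[OF assms(4)] c0_scale[OF e]]
      linear_on_scale[OF S_linear e] by metis
  then show ?thesis
    using vanishes_at_peak_point[OF assms(1-3) c0_fun_upd_zero[OF assms(4)]] by simp
qed

definition zero_set :: "'a set" where
  "zero_set = {y \<in> topspace X. \<forall>u\<in>c0 I. S u y = 0}"

lemma zero_set_subset: "zero_set \<subseteq> topspace X"
  by (auto simp: zero_set_def)

lemma closedin_zero_set: "closedin X zero_set"
proof -
  have "(\<lambda>i. 0) \<in> c0 I" by (simp add: c0_def)
  then have "zero_set = (\<Inter>u\<in>c0 I. {y \<in> topspace X. S u y \<in> {0}})"
    by (auto simp: zero_set_def)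
  moreover have "closedin X {y \<in> topspace X. S u y \<in> {0}}" if "u \<in> c0 I" for u
    using S_continuous[OF that] by (intro closedin_continuous_map_preimage) auto
  ultimately show ?thesis using \<open>(\<lambda>i. 0) \<in> c0 I\<close> by auto
qed

end

locale c0_isometry_projection = c0_isometry X I S
  for X :: "'a topology" and I :: "'i set" and S :: "('i \<Rightarrow> real) \<Rightarrow> 'a \<Rightarrow> real" +
  fixes xs :: "'i \<Rightarrow> 'a" and E :: "('a \<Rightarrow> real) \<Rightarrow> 'a \<Rightarrow> real"
  assumes peak_point: "i \<in> I \<Longrightarrow> xs i \<in> topspace X"
    and peak_value: "i \<in> I \<Longrightarrow> \<bar>S (indicator {i}) (xs i)\<bar> = 1"
    and extension: "extension_operator X zero_set E"
begin

definition defect :: "('a \<Rightarrow> real) \<Rightarrow> 'a \<Rightarrow> real" where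
  "defect h x = h x - E (zero_extension zero_set h) x"

definition coef :: "('a \<Rightarrow> real) \<Rightarrow> 'i \<Rightarrow> real" where
  "coef h i = (if i \<in> I then S (indicator {i}) (xs i) * defect h (xs i) else 0)"

definition proj :: "('a \<Rightarrow> real) \<Rightarrow> 'a \<Rightarrow> real" where
  "proj h = S (coef h)"

lemma E_cfun: "h \<in> cfun X zero_set \<Longrightarrow> E h \<in> cfun X (topspace X)"
  and E_linear: "linear_on (cfun X zero_set) E"
  and E_extends: "h \<in> cfun X zero_set \<Longrightarrow> x \<in> zero_set \<Longrightarrow> E h x = h x"
  using extension unfolding extension_operator_def by auto

lemma eval_at_xs: "u \<in> c0 I \<Longrightarrow> i \<in> I \<Longrightarrow> S u (xs i) = S (indicator {i}) (xs i) * u i"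
  using eval_at_peak_point peak_point peak_value by blast

lemma abs_coef: "i \<in> I \<Longrightarrow> \<bar>coef h i\<bar> = \<bar>defect h (xs i)\<bar>"
  using peak_value by (simp add: coef_def abs_mult)

lemma defect_continuous:
  "h \<in> cfun X (topspace X) \<Longrightarrow> continuous_map X euclideanreal (defect h)"
  using E_cfun[OF zero_extension_in_cfun] unfolding defect_def
  by (intro continuous_intros) (auto simp: cfun_topspace)

lemma defect_zero_set: "h \<in> cfun X (topspace X) \<Longrightarrow> y \<in> zero_set \<Longrightarrow> defect h y = 0"
  using E_extends[OF zero_extension_in_cfun] by (simp add: defect_def zero_extension_def)

lemma coef_in_c0:
  assumes h: "h \<in> cfun X (topspace X)" shows "coef h \<in> c0 I"
proof -
  have "finite {i\<in>I. \<epsilon> \<le> \<bar>defect h (xs i)\<bar>}" if "\<epsilon> > 0" for \<epsilon>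
  proof (rule finite_large_values_at_points[where F = "S ` c0 I"])
    show "finite {i\<in>I. \<epsilon> \<le> \<bar>f (xs i)\<bar>}" if f: "f \<in> S ` c0 I" and "\<epsilon> > 0" for f \<epsilon>
    proof -
      obtain u where "u \<in> c0 I" "f = S u" using f by blast
      then have "{i\<in>I. \<epsilon> \<le> \<bar>f (xs i)\<bar>} = {i\<in>I. \<epsilon> \<le> \<bar>u i\<bar>}"
        using eval_at_xs peak_value by (auto simp: abs_mult)
      then show ?thesis using \<open>u \<in> c0 I\<close> \<open>\<epsilon> > 0\<close> by (simp add: c0_def)
    qed
    show "\<exists>f\<in>S ` c0 I. f z \<noteq> 0" if "z \<in> topspace X" "defect h z \<noteq> 0" for z
      using that defect_zero_set[OF h] by (auto simp: zero_set_def)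
  qed (use compact defect_continuous[OF h] S_continuous peak_point that in auto)
  moreover have "{i\<in>I. \<epsilon> \<le> \<bar>coef h i\<bar>} = {i\<in>I. \<epsilon> \<le> \<bar>defect h (xs i)\<bar>}" for \<epsilon>
    using abs_coef by auto
  ultimately show ?thesis by (simp add: c0_def coef_def)
qed

lemma coef_add:
  assumes "h \<in> cfun X (topspace X)" "k \<in> cfun X (topspace X)"
  shows "coef (\<lambda>x. h x + k x) = (\<lambda>i. coef h i + coef k i)"
proof -
  have "zero_extension zero_set (\<lambda>x. h x + k x) =
      (\<lambda>x. zero_extension zero_set h x + zero_extension zero_set k x)"
    by (auto simp: zero_extension_def)
  then have "E (zero_extension zero_set (\<lambda>x. h x + k x)) =
      (\<lambda>y. E (zero_extension zero_set h) y + E (zero_extension zero_set k) y)"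
    using linear_on_add[OF E_linear zero_extension_in_cfun[OF assms(1)]
        zero_extension_in_cfun[OF assms(2)]] by simp
  then show ?thesis by (auto simp: coef_def defect_def algebra_simps)
qed

lemma coef_scale:
  assumes "h \<in> cfun X (topspace X)"
  shows "coef (\<lambda>x. c * h x) = (\<lambda>i. c * coef h i)"
proof -
  have "zero_extension zero_set (\<lambda>x. c * h x) = (\<lambda>x. c * zero_extension zero_set h x)"
    by (auto simp: zero_extension_def)
  then have "E (zero_extension zero_set (\<lambda>x. c * h x)) =
      (\<lambda>y. c * E (zero_extension zero_set h) y)"
    using linear_on_scale[OF E_linear zero_extension_in_cfun[OF assms]] by simp
  then show ?thesis by (auto simp: coef_def defect_def algebra_simps)
qed

lemma coef_bounded: "\<exists>C. \<forall>h\<in>cfun X (topspace X). supn I (coef h) \<le> C * supn (topspace X) h"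
proof -
  obtain B where B: "\<And>h. h \<in> cfun X zero_set \<Longrightarrow> supn (topspace X) (E h) \<le> B * supn zero_set h"
    using extension unfolding extension_operator_def by blast
  have "supn I (coef h) \<le> (1 + max B 0) * supn (topspace X) h"
    if h: "h \<in> cfun X (topspace X)" for h
  proof (rule supn_le)
    let ?N = "supn (topspace X)" and ?h\<^sub>L = "zero_extension zero_set h"
    have N_h: "0 \<le> ?N h" using supn_cfun_nonneg[OF compact h] .
    then show "0 \<le> (1 + max B 0) * ?N h" by simp
    have "?N (E ?h\<^sub>L) \<le> B * supn zero_set ?h\<^sub>L" using B[OF zero_extension_in_cfun[OF h]] .
    also have "\<dots> \<le> max B 0 * supn zero_set ?h\<^sub>L"
      using supn_zero_extension_nonneg[OF compact h zero_set_subset]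
      by (intro mult_right_mono) auto
    also have "\<dots> \<le> max B 0 * ?N h"
      using supn_zero_extension_le[OF compact h zero_set_subset] by (intro mult_left_mono) auto
    finally have N_E: "?N (E ?h\<^sub>L) \<le> max B 0 * ?N h" .
    fix i assume "i \<in> I"
    then have "xs i \<in> topspace X" using peak_point by blast
    have "\<bar>coef h i\<bar> \<le> \<bar>h (xs i)\<bar> + \<bar>E ?h\<^sub>L (xs i)\<bar>"
      using abs_coef[OF \<open>i \<in> I\<close>] by (simp add: defect_def)
    also have "\<dots> \<le> ?N h + ?N (E ?h\<^sub>L)"
      using abs_le_supn_cfun[OF compact h \<open>xs i \<in> topspace X\<close>]
        abs_le_supn_cfun[OF compact E_cfun[OF zero_extension_in_cfun[OF h]] \<open>xs i \<in> topspace X\<close>]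
      by simp
    finally show "\<bar>coef h i\<bar> \<le> (1 + max B 0) * ?N h" using N_E by (simp add: algebra_simps)
  qed
  then show ?thesis by blast
qed

lemma E_zero: "E (\<lambda>x. 0) = (\<lambda>x. 0)"
proof -
  have "(\<lambda>x. 0) \<in> cfun X zero_set" by (simp add: cfun_def)
  from linear_on_scale[OF E_linear this, of 0] show ?thesis by simp
qed

lemma coef_S:
  assumes u: "u \<in> c0 I" shows "coef (S u) = u"
proof -
  have "zero_extension zero_set (S u) = (\<lambda>x. 0)"
    using u by (auto simp: zero_extension_def zero_set_def)
  then have "defect (S u) = S u" by (simp add: defect_def[abs_def] E_zero)
  moreover have "S (indicator {i}) (xs i) * S (indicator {i}) (xs i) = 1" if "i \<in> I" for i
    using peak_value[OF that] by (metis abs_mult_self_eq mult_1)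
  ultimately show ?thesis
    using u eval_at_xs[OF u] by (auto simp: coef_def c0_def mult.assoc[symmetric])
qed

lemma complemented: "complemented_in X (S ` c0 I)"
  unfolding complemented_in_def
proof (intro exI[of _ proj] conjI)
  show "\<forall>h\<in>cfun X (topspace X). proj h \<in> cfun X (topspace X)"
    using S_cfun coef_in_c0 by (simp add: proj_def)
  show "linear_on (cfun X (topspace X)) proj"
    unfolding linear_on_def proj_def
    using coef_add coef_scale linear_on_add[OF S_linear] linear_on_scale[OF S_linear] coef_in_c0
    by simp
  show "\<exists>B. \<forall>h\<in>cfun X (topspace X). supn (topspace X) (proj h) \<le> B * supn (topspace X) h"
    using coef_bounded supn_S coef_in_c0 by (simp add: proj_def)
  show "\<forall>f\<in>S ` c0 I. proj f = f"
    using coef_S by (auto simp: proj_def)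
  then show "proj ` cfun X (topspace X) = S ` c0 I"
    using coef_in_c0 S_cfun by (force simp: proj_def)
qed

end

theorem corollary2p6:
  fixes X :: "'a topology" and I :: "'i set" and S :: "('i \<Rightarrow> real) \<Rightarrow> ('a \<Rightarrow> real)"
  assumes "compact_space X" and "Hausdorff_space X" and "extension_property X"
    and "lin_isometric_embedding I X S"
  shows "complemented_in X (S ` c0 I)"
proof -
  interpret c0_isometry X I S
    using assms(1,4) by unfold_locales
  obtain xs where xs: "\<And>i. i \<in> I \<Longrightarrow> xs i \<in> topspace X \<and> \<bar>S (indicator {i}) (xs i)\<bar> = 1"
    using peak_point_exists by metis
  obtain E where "extension_operator X zero_set E"
    using extension_property_imp_extension_operator[OF assms(3) closedin_zero_set] by blast
  then interpret c0_isometry_projection X I S xs E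
    using xs by unfold_locales auto
  show ?thesis by (rule complemented)
qed

end
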